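(* Let $p>1$ be an integer and let $\mathbf{l}=(l_1,\dots,l_q)\in\mathbb{N}^q$, $\mathbf{r}=(r_1,\dots,r_s)\in\mathbb{N}^s$ have all components greater than $1$. Let $n=p\,\Pi(\mathbf{l})\,\Pi(\mathbf{r})$ and $A\in\{0,1\}^{n\times n}$. Then $A$ admits both an $(l_1,\dots,l_q,\,p\Pi(\mathbf{r}))$ factorization and a $(p\Pi(\mathbf{l}),\,r_1,\dots,r_s)$ factorization if and only if $A$ admits an $(l_1,\dots,l_q,p,r_1,\dots,r_s)$ factorization.
   Context: For $\mathbf{n}=(n_1,\dots,n_d)$, $\Pi(\mathbf{n})=\prod_{i=1}^d n_i$. Kronecker products of binary matrices use Boolean arithmetic ($1+1=1$). For positive integers $n_1,\dots,n_m$ with $\prod n_i=n$, an $(n_1,\dots,n_m)$ factorization of $A\in\{0,1\}^{n\times n}$ is an expression $A=A_1\otimes\cdots\otimes A_m$ with $A_i\in\{0,1\}^{n_i\times n_i}$. *)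

theory Defs
  imports Main
begin

text \<open>Binary matrices are represented as Boolean-valued functions on index pairs;
  an m x m binary matrix is such a function, of which only the entries with
  indices below m are relevant. True = 1, False = 0, so the Boolean Kronecker
  product (1+1=1) is given by conjunction (the sum in a Kronecker product
  entry has a single term).\<close>

type_synonym bmat = "nat \<Rightarrow> nat \<Rightarrow> bool"

definition kron :: "nat \<Rightarrow> bmat \<Rightarrow> bmat \<Rightarrow> bmat" where
  "kron b M N = (\<lambda>i j. M (i div b) (j div b) \<and> N (i mod b) (j mod b))"

fun kron_list :: "(nat \<times> bmat) list \<Rightarrow> bmat" where
  "kron_list [] = (\<lambda>i j. i = j)"
| "kron_list ((k, M) # rest) = kron (prod_list (map fst rest)) M (kron_list rest)"

definition has_factorization :: "nat list \<Rightarrow> nat \<Rightarrow> bmat \<Rightarrow> bool" where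
  "has_factorization ns n A \<longleftrightarrow> prod_list ns = n \<and>
     (\<exists>Ms :: bmat list. length Ms = length ns \<and>
        (\<forall>i<n. \<forall>j<n. A i j = kron_list (zip ns Ms) i j))"

end

theory Submission
  imports Defs
begin

(* Kronecker products are associative, so an (l, p, r) factorization coarsens to the two others.
  Conversely, write A = L \<otimes> B = C \<otimes> R with L of size \<Pi>(l) and R of size \<Pi>(r). If L has a
  nonzero entry (x, y), then B is the (x, y) block of A, which by the second factorization is
  P \<otimes> R with P the (x, y) block of C, of size p; hence A = L \<otimes> P \<otimes> R. If L vanishes,
  then so does A, and any P will do. None of the hypotheses is needed: the sizes are arbitrary,
  and n is already fixed by each factorization. *)

definition bmat_eq :: "nat \<Rightarrow> bmat \<Rightarrow> bmat \<Rightarrow> bool" where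
  "bmat_eq n A B \<longleftrightarrow> (\<forall>i<n. \<forall>j<n. A i j = B i j)"

lemma bmat_eq_sym: "bmat_eq n A B \<Longrightarrow> bmat_eq n B A"
  by (simp add: bmat_eq_def)

lemma bmat_eq_trans [trans]: "bmat_eq n A B \<Longrightarrow> bmat_eq n B C \<Longrightarrow> bmat_eq n A C"
  by (simp add: bmat_eq_def)

lemma has_factorization_iff:
  "has_factorization ns n A \<longleftrightarrow>
     prod_list ns = n \<and> (\<exists>Fs. map fst Fs = ns \<and> bmat_eq n A (kron_list Fs))"
proof -
  have "(\<exists>Ms. length Ms = length ns \<and> bmat_eq n A (kron_list (zip ns Ms))) \<longleftrightarrow>
        (\<exists>Fs. map fst Fs = ns \<and> bmat_eq n A (kron_list Fs))"
    by (metis length_map map_fst_zip zip_map_fst_snd)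
  then show ?thesis
    by (simp add: has_factorization_def bmat_eq_def)
qed

lemma mod_mult_div_eq_div_mod: "x mod (b * a) div b = x div b mod (a::nat)"
proof (cases "b = 0")
  case False
  then show ?thesis by (simp add: mod_mult2_eq)
qed simp

lemma kron_assoc: "kron (a * b) M (kron b N K) = kron b (kron a M N) K"
  by (auto simp: kron_def fun_eq_iff mult.commute[of a] div_mult2_eq mod_mult_div_eq_div_mod
      mod_mod_cancel)

lemma kron_id_left: "bmat_eq b (kron b (\<lambda>i j. i = j) N) N"
  by (simp add: bmat_eq_def kron_def)

lemma kron_cong_right:
  assumes "bmat_eq b N N'"
  shows "bmat_eq (a * b) (kron b M N) (kron b M N')"
proof -
  have "i mod b < b" if "i < a * b" for i
    using that by (cases "b = 0") auto
  then show ?thesis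
    using assms by (simp add: bmat_eq_def kron_def)
qed

lemma kron_list_singleton: "kron_list [(k, M)] = M"
  by (simp add: kron_def fun_eq_iff)

lemma kron_list_append:
  "bmat_eq (prod_list (map fst (xs @ ys))) (kron_list (xs @ ys))
     (kron (prod_list (map fst ys)) (kron_list xs) (kron_list ys))"
proof (induction xs)
  case Nil
  show ?case using kron_id_left bmat_eq_sym by simp
next
  case (Cons x xs)
  obtain k M where x: "x = (k, M)" by fastforce
  let ?X = "prod_list (map fst xs)" and ?Y = "prod_list (map fst ys)"
  have "bmat_eq (k * (?X * ?Y)) (kron (?X * ?Y) M (kron_list (xs @ ys)))
          (kron (?X * ?Y) M (kron ?Y (kron_list xs) (kron_list ys)))"
    using kron_cong_right Cons.IH by simp
  then show ?case by (simp add: x kron_assoc mult.assoc)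
qed

lemma kron_list_merge:
  "bmat_eq (prod_list (map fst (xs @ ys @ zs))) (kron_list (xs @ ys @ zs))
     (kron_list (xs @ (prod_list (map fst ys), kron_list ys) # zs))"
proof -
  let ?X = "prod_list (map fst xs)" and ?Y = "prod_list (map fst ys)"
    and ?Z = "prod_list (map fst zs)"
  have "bmat_eq (?X * (?Y * ?Z)) (kron_list (xs @ ys @ zs))
          (kron (?Y * ?Z) (kron_list xs) (kron_list (ys @ zs)))"
    using kron_list_append[of xs "ys @ zs"] by simp
  also have "bmat_eq (?X * (?Y * ?Z)) \<dots>
               (kron (?Y * ?Z) (kron_list xs) (kron_list ((?Y, kron_list ys) # zs)))"
    using kron_cong_right kron_list_append[of ys zs] by simp
  also have "bmat_eq (?X * (?Y * ?Z)) \<dots> (kron_list (xs @ (?Y, kron_list ys) # zs))"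
    using bmat_eq_sym kron_list_append[of xs "(?Y, kron_list ys) # zs"] by simp
  finally show ?thesis by simp
qed

definition bmat_block :: "nat \<Rightarrow> nat \<Rightarrow> nat \<Rightarrow> bmat \<Rightarrow> bmat" where
  "bmat_block s x y M = (\<lambda>i j. M (x * s + i) (y * s + j))"

lemma bmat_eq_block:
  assumes "bmat_eq (q * s) A B" "x < q" "y < q"
  shows "bmat_eq s (bmat_block s x y A) (bmat_block s x y B)"
proof -
  have "z * s + i < q * s" if "z < q" "i < s" for z i
  proof -
    have "(z + 1) * s \<le> q * s" using that(1) by (intro mult_right_mono) auto
    then show ?thesis using that(2) by simp
  qed
  then show ?thesis
    using assms by (simp add: bmat_eq_def bmat_block_def)
qed

lemma bmat_block_kron:
  assumes "M x y"
  shows "bmat_eq b (bmat_block b x y (kron b M N)) N"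
  using assms by (simp add: bmat_eq_def bmat_block_def kron_def)

lemma bmat_block_kron_right:
  assumes "0 < r"
  shows "bmat_block (p * r) x y (kron r C R) = kron r (bmat_block p x y C) R"
proof -
  have "(z * (p * r) + i) div r = z * p + i div r" "(z * (p * r) + i) mod r = i mod r" for z i
    using assms by (simp_all add: mult.assoc[symmetric])
  then show ?thesis
    by (simp add: bmat_block_def kron_def)
qed

lemma kron_cong_right_vanishing:
  assumes "\<forall>x<q. \<forall>y<q. \<not> L x y"
  shows "bmat_eq (q * s) (kron s L N) (kron s L N')"
  using assms by (simp add: bmat_eq_def kron_def less_mult_imp_div_less)

lemma kron_common_refinement:
  assumes left: "bmat_eq (q * (p * r)) A (kron (p * r) L B)"
    and right: "bmat_eq (q * (p * r)) A (kron r C R)"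
  obtains P where "bmat_eq (q * (p * r)) A (kron (p * r) L (kron r P R))"
proof (cases "\<exists>x<q. \<exists>y<q. L x y")
  case True
  then obtain x y where xy: "x < q" "y < q" "L x y" by blast
  show ?thesis
  proof (cases "r = 0")
    case False
    have "bmat_eq (p * r) B (bmat_block (p * r) x y (kron (p * r) L B))"
      using bmat_block_kron[of L, OF xy(3)] bmat_eq_sym by blast
    also have "bmat_eq (p * r) \<dots> (bmat_block (p * r) x y A)"
      using bmat_eq_block[OF bmat_eq_sym[OF left] xy(1,2)] .
    also have "bmat_eq (p * r) \<dots> (bmat_block (p * r) x y (kron r C R))"
      using bmat_eq_block[OF right xy(1,2)] .
    also have "\<dots> = kron r (bmat_block p x y C) R"
      using False by (simp add: bmat_block_kron_right)
    finally have "bmat_eq (q * (p * r)) (kron (p * r) L B)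
                    (kron (p * r) L (kron r (bmat_block p x y C) R))"
      by (rule kron_cong_right)
    then show ?thesis
      using that bmat_eq_trans[OF left] by blast
  qed (use that in \<open>simp add: bmat_eq_def\<close>)
next
  case False
  then show ?thesis
    using that bmat_eq_trans[OF left kron_cong_right_vanishing] by blast
qed

lemma has_factorization_merge:
  assumes "has_factorization (ls @ ms @ ks) n A"
  shows "has_factorization (ls @ prod_list ms # ks) n A"
proof -
  obtain Fs where Fs: "map fst Fs = ls @ ms @ ks" and n: "prod_list (ls @ ms @ ks) = n"
    and A: "bmat_eq n A (kron_list Fs)"
    using assms by (auto simp: has_factorization_iff)
  obtain Ls Ms Ks where split: "Fs = Ls @ Ms @ Ks"
    and fst: "map fst Ls = ls" "map fst Ms = ms" "map fst Ks = ks"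
    using Fs map_eq_append_conv[of fst Fs ls "ms @ ks"] map_eq_append_conv[of fst _ ms ks]
    by metis
  let ?Gs = "Ls @ (prod_list ms, kron_list Ms) # Ks"
  have "bmat_eq n (kron_list Fs) (kron_list ?Gs)"
    using kron_list_merge[of Ls Ms Ks] by (simp add: split fst n[symmetric])
  then have "bmat_eq n A (kron_list ?Gs)"
    using A bmat_eq_trans by blast
  moreover have "map fst ?Gs = ls @ prod_list ms # ks"
    using fst by simp
  moreover have "prod_list (ls @ prod_list ms # ks) = n"
    using n by simp
  ultimately show ?thesis
    unfolding has_factorization_iff by blast
qed

lemma has_factorization_refine:
  assumes "has_factorization (ls @ [p * prod_list rs]) n A"
    and "has_factorization (p * prod_list ls # rs) n A"
  shows "has_factorization (ls @ p # rs) n A"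
proof -
  let ?q = "prod_list ls" and ?r = "prod_list rs"
  obtain Fs where Fs: "map fst Fs = ls @ [p * ?r]" and n: "n = ?q * (p * ?r)"
    and A_Fs: "bmat_eq n A (kron_list Fs)"
    using assms(1) by (auto simp: has_factorization_iff)
  obtain Ls B where Ls: "map fst Ls = ls" and Fs_eq: "Fs = Ls @ [(p * ?r, B)]"
    using Fs by (auto simp: map_eq_append_conv)
  obtain C Rs where Rs: "map fst Rs = rs" and A_CRs: "bmat_eq n A (kron_list ((p * ?q, C) # Rs))"
    using assms(2) by (auto simp: has_factorization_iff)
  let ?L = "kron_list Ls" and ?R = "kron_list Rs"
  have "bmat_eq n (kron_list Fs) (kron (p * ?r) ?L B)"
    using kron_list_append[of Ls "[(p * ?r, B)]"] unfolding kron_list_singleton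
    by (simp add: Fs_eq Ls n)
  then have left: "bmat_eq (?q * (p * ?r)) A (kron (p * ?r) ?L B)"
    using A_Fs bmat_eq_trans n by blast
  have right: "bmat_eq (?q * (p * ?r)) A (kron ?r C ?R)"
    using A_CRs by (simp add: Rs n)
  obtain P where "bmat_eq (?q * (p * ?r)) A (kron (p * ?r) ?L (kron ?r P ?R))"
    using kron_common_refinement[OF left right] .
  moreover have "bmat_eq (?q * (p * ?r)) (kron (p * ?r) ?L (kron ?r P ?R))
                   (kron_list (Ls @ (p, P) # Rs))"
    using bmat_eq_sym[OF kron_list_append[of Ls "(p, P) # Rs"]] by (simp add: Ls Rs)
  ultimately have "bmat_eq n A (kron_list (Ls @ (p, P) # Rs))"
    using bmat_eq_trans n by blast
  moreover have "map fst (Ls @ (p, P) # Rs) = ls @ p # rs" "prod_list (ls @ p # rs) = n"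
    using Ls Rs n by simp_all
  ultimately show ?thesis
    unfolding has_factorization_iff by blast
qed

theorem corollary1:
  fixes p n :: nat and l r :: "nat list" and A :: bmat
  assumes "p > 1"
    and "\<forall>x\<in>set l. x > 1"
    and "\<forall>x\<in>set r. x > 1"
    and "n = p * prod_list l * prod_list r"
  shows "(has_factorization (l @ [p * prod_list r]) n A \<and>
          has_factorization ((p * prod_list l) # r) n A)
         \<longleftrightarrow> has_factorization (l @ [p] @ r) n A"
proof
  assume "has_factorization (l @ [p] @ r) n A"
  then have "has_factorization (l @ [prod_list (p # r)]) n A"
    and "has_factorization (prod_list (l @ [p]) # r) n A"
    using has_factorization_merge[of l "p # r" "[]"] has_factorization_merge[of "[]" "l @ [p]" r]
    by simp_all
  then show "has_factorization (l @ [p * prod_list r]) n A \<and>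
             has_factorization ((p * prod_list l) # r) n A"
    by (simp_all add: mult.commute)
qed (simp add: has_factorization_refine)

end
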